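(* Let $G=(V,E)$ be a finite simple graph of order at least $3$ in which every connected component has order at least $3$, let $M\subset V$ be any set of (marked) vertices, and let $\mathcal{G}$ be an Abelian group with $|\mathcal{G}|\geq \Delta(G)+\mathrm{col}(G)-1$. Then there exists a labeling $f\colon E\to\mathcal{G}\setminus\{0\}$ such that $w_f(v)\neq 0$ for every $v\in M$ and $w_f(u)\neq w_f(v)$ for every edge $uv\in E$ with $u,v\notin M$.
   Context: $w_f(v)=\sum_{u\in N(v)} f(uv)$ (sum in $\mathcal{G}$) is the weighted degree of $v$. $\Delta(G)$ is the maximum degree of $G$. The coloring number $\mathrm{col}(G)$ is the least integer $k$ such that every subgraph of $G$ has minimum degree less than $k$ (equivalently, the vertices can be ordered so that each has at most $k-1$ neighbours preceding it). *)

theory Defs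
  imports Main
begin

definition simple_graph :: "'a set \<Rightarrow> 'a set set \<Rightarrow> bool" where
  "simple_graph V E \<longleftrightarrow> finite V \<and> (\<forall>e\<in>E. e \<subseteq> V \<and> card e = 2)"

definition adj :: "'a set set \<Rightarrow> 'a \<Rightarrow> 'a \<Rightarrow> bool" where
  "adj E u v \<longleftrightarrow> {u, v} \<in> E"

definition degree :: "'a set set \<Rightarrow> 'a \<Rightarrow> nat" where
  "degree E v = card {u. {u, v} \<in> E}"

definition max_degree :: "'a set \<Rightarrow> 'a set set \<Rightarrow> nat" where
  "max_degree V E = Max (degree E ` V)"

definition component :: "'a set \<Rightarrow> 'a set set \<Rightarrow> 'a \<Rightarrow> 'a set" where
  "component V E v = {u\<in>V. (v, u) \<in> {(x, y). x \<in> V \<and> y \<in> V \<and> adj E x y}\<^sup>*}"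

definition subgraph :: "'a set \<Rightarrow> 'a set set \<Rightarrow> 'a set \<Rightarrow> 'a set set \<Rightarrow> bool" where
  "subgraph V' E' V E \<longleftrightarrow> V' \<subseteq> V \<and> E' \<subseteq> E \<and> (\<forall>e\<in>E'. e \<subseteq> V')"

definition min_degree :: "'a set \<Rightarrow> 'a set set \<Rightarrow> nat" where
  "min_degree V' E' = Min (degree E' ` V')"

definition col :: "'a set \<Rightarrow> 'a set set \<Rightarrow> nat" where
  "col V E = (LEAST k. \<forall>V' E'. subgraph V' E' V E \<and> V' \<noteq> {} \<longrightarrow> min_degree V' E' < k)"

definition wdeg :: "'a set set \<Rightarrow> ('a set \<Rightarrow> 'g::comm_monoid_add) \<Rightarrow> 'a \<Rightarrow> 'g" where
  "wdeg E f v = (\<Sum>e\<in>{e\<in>E. v \<in> e}. f e)"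

end

theory Submission
  imports Defs
begin

(* The labelling is built one connected component at a time, keeping it nonzero on every
   edge and proper on the components already treated.  Relabelling an edge uv changes only
   the weighted degrees of u and v, and once the other edges at v are fixed, v ends up
   proper as soon as the label of uv avoids 0 and at most deg v - 1 further values: one per
   adjacent unmarked vertex already settled, or the single value making w(v) = 0 if v is
   marked.  In a component we fix a path x r y and settle all other vertices in order of
   decreasing distance to it, each through the edge to a closer neighbour, so the group has
   room to spare because deg v <= Delta < Delta + col - 1.  Then x is settled through rx,
   whose label is also chosen so that the sums at r and y over their other edges differ,
   and finally r and y are settled together through ry.  This last label must avoid about
   deg y + deg r - 1 values, which is why y is taken of degree less than col, as the
   definition of the colouring number allows (forests, col = 2, need a separate choice). *)

section \<open>Proper labellings and forbidden labels\<close>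

definition neighbours :: "'a set set \<Rightarrow> 'a \<Rightarrow> 'a set" where
  "neighbours E v = {u. {u, v} \<in> E}"

definition wdeg_except ::
  "'a set set \<Rightarrow> ('a set \<Rightarrow> 'g::comm_monoid_add) \<Rightarrow> 'a \<Rightarrow> 'a \<Rightarrow> 'g" where
  "wdeg_except E f u v = (\<Sum>z\<in>neighbours E v - {u}. f {z, v})"

definition proper_on ::
  "'a set set \<Rightarrow> 'a set \<Rightarrow> ('a set \<Rightarrow> 'g::comm_monoid_add) \<Rightarrow> 'a set \<Rightarrow> bool" where
  "proper_on E M f D \<longleftrightarrow> (\<forall>v\<in>D. v \<in> M \<longrightarrow> wdeg E f v \<noteq> 0) \<and>
     (\<forall>u\<in>D. \<forall>v\<in>D. {u, v} \<in> E \<and> u \<notin> M \<and> v \<notin> M \<longrightarrow> wdeg E f u \<noteq> wdeg E f v)"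

definition proper_at ::
  "'a set set \<Rightarrow> 'a set \<Rightarrow> ('a set \<Rightarrow> 'g::comm_monoid_add) \<Rightarrow> 'a set \<Rightarrow> 'a \<Rightarrow> bool" where
  "proper_at E M f D v \<longleftrightarrow> (v \<in> M \<longrightarrow> wdeg E f v \<noteq> 0) \<and>
     (\<forall>z\<in>D. {z, v} \<in> E \<and> z \<notin> M \<and> v \<notin> M \<longrightarrow> wdeg E f z \<noteq> wdeg E f v)"

text \<open>Once the label of \<open>uv\<close> is set to \<open>a\<close>, the weighted degree of \<open>v\<close> is
  \<open>wdeg_except E f u v + a\<close>; these are the values of \<open>a\<close> that would make \<open>v\<close> improper
  with respect to \<open>D\<close>.\<close>
definition forbidden ::
  "'a set set \<Rightarrow> 'a set \<Rightarrow> ('a set \<Rightarrow> 'g::ab_group_add) \<Rightarrow> 'a set \<Rightarrow> 'a \<Rightarrow> 'a \<Rightarrow> 'g set" where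
  "forbidden E M f D u v = (if v \<in> M then {- wdeg_except E f u v}
     else (\<lambda>z. wdeg E f z - wdeg_except E f u v) ` {z \<in> D \<inter> neighbours E v. z \<notin> M})"

lemma ex_not_in_small_set:
  fixes S :: "'g set"
  assumes "infinite (UNIV :: 'g set) \<or> N \<le> card (UNIV :: 'g set)" "finite S" "card S < N"
  shows "\<exists>a. a \<notin> S"
proof (cases "finite (UNIV :: 'g set)")
  case True
  with assms have "S \<noteq> UNIV" by auto
  then show ?thesis by auto
qed (use assms ex_new_if_finite in blast)

lemma wdeg_fun_upd_other: "w \<notin> e \<Longrightarrow> wdeg E (f(e := a)) w = wdeg E f w"
  unfolding wdeg_def by (intro sum.cong) auto

lemma wdeg_except_fun_upd_other:
  "v \<notin> e \<Longrightarrow> wdeg_except E (f(e := a)) u v = wdeg_except E f u v"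
  unfolding wdeg_except_def by (intro sum.cong) auto

lemma proper_on_fun_upd:
  assumes "e \<inter> D = {}"
  shows "proper_on E M (f(e := a)) D \<longleftrightarrow> proper_on E M f D"
proof -
  have "\<forall>v\<in>D. wdeg E (f(e := a)) v = wdeg E f v"
    using assms by (auto intro: wdeg_fun_upd_other)
  then show ?thesis unfolding proper_on_def by simp
qed

lemma proper_on_insert_iff:
  assumes "{v, v} \<notin> E"
  shows "proper_on E M f (insert v D) \<longleftrightarrow> proper_on E M f D \<and> proper_at E M f D v"
  using assms unfolding proper_on_def proper_at_def by (auto simp: insert_commute)

locale sgraph =
  fixes V :: "'a set" and E :: "'a set set"
  assumes simple_graph: "simple_graph V E"
begin

lemma finite_V: "finite V"
  using simple_graph unfolding simple_graph_def by auto

lemma edge_subset: "e \<in> E \<Longrightarrow> e \<subseteq> V"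
  using simple_graph unfolding simple_graph_def by auto

lemma edge_doubleton:
  assumes "e \<in> E"
  obtains a b where "e = {a, b}" "a \<noteq> b"
  using assms simple_graph unfolding simple_graph_def by (auto simp: card_2_iff)

lemma loop_free: "{v, v} \<notin> E"
  using simple_graph unfolding simple_graph_def by auto

lemma neighbours_subset: "neighbours E v \<subseteq> V"
  unfolding neighbours_def using edge_subset by auto

lemma finite_neighbours: "finite (neighbours E v)"
  using neighbours_subset finite_V by (rule finite_subset)

lemma not_in_neighbours_self: "v \<notin> neighbours E v"
  unfolding neighbours_def using loop_free by auto

lemma neighbours_sym: "u \<in> neighbours E v \<longleftrightarrow> v \<in> neighbours E u"
  unfolding neighbours_def by (simp add: insert_commute)

lemma degree_eq_card_neighbours: "degree E v = card (neighbours E v)"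
  unfolding degree_def neighbours_def ..

lemma degree_le_max_degree: "v \<in> V \<Longrightarrow> card (neighbours E v) \<le> max_degree V E"
  unfolding max_degree_def degree_eq_card_neighbours[symmetric] using finite_V by simp

lemma neighbours_eq_singleton:
  assumes "u \<in> neighbours E v" "card (neighbours E v) < 2"
  shows "neighbours E v = {u}"
proof -
  have "card (neighbours E v) = 1"
    using assms finite_neighbours[of v] card_gt_0_iff[of "neighbours E v"] by auto
  then show ?thesis using assms(1) by (auto simp: card_1_singleton_iff)
qed

lemma edges_at_eq_image: "{e\<in>E. v \<in> e} = (\<lambda>u. {u, v}) ` neighbours E v"
proof (intro equalityI subsetI)
  fix e assume "e \<in> {e\<in>E. v \<in> e}"
  then have e: "e \<in> E" "v \<in> e" by auto
  obtain a b where "e = {a, b}" using edge_doubleton[OF e(1)] by blast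
  with e have "e = {if a = v then b else a, v}" by auto
  with e show "e \<in> (\<lambda>u. {u, v}) ` neighbours E v" unfolding neighbours_def by auto
qed (auto simp: neighbours_def)

lemma wdeg_eq_sum_neighbours: "wdeg E f v = (\<Sum>u\<in>neighbours E v. f {u, v})"
proof -
  have "inj_on (\<lambda>u. {u, v}) (neighbours E v)"
    using not_in_neighbours_self unfolding inj_on_def by (auto simp: doubleton_eq_iff)
  then show ?thesis unfolding wdeg_def edges_at_eq_image by (simp add: sum.reindex)
qed

lemma wdeg_eq_add_wdeg_except:
  "u \<in> neighbours E v \<Longrightarrow> wdeg E f v = f {u, v} + wdeg_except E f u v"
  unfolding wdeg_eq_sum_neighbours wdeg_except_def by (simp add: sum.remove finite_neighbours)

lemma wdeg_except_fun_upd_excluded: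
  "wdeg_except E (f({u, v} := a)) u v = wdeg_except E f u v"
  unfolding wdeg_except_def using not_in_neighbours_self
  by (intro sum.cong) (auto simp: doubleton_eq_iff)

lemma wdeg_fun_upd_edge:
  "u \<in> neighbours E v \<Longrightarrow> wdeg E (f({u, v} := a)) v = wdeg_except E f u v + a"
  by (simp add: wdeg_eq_add_wdeg_except wdeg_except_fun_upd_excluded add.commute)

lemma wdeg_except_fun_upd_edge:
  fixes f :: "'a set \<Rightarrow> 'g::ab_group_add"
  assumes "x \<in> neighbours E v - {u}"
  shows "wdeg_except E (f({x, v} := a)) u v = wdeg_except E f u v - f {x, v} + a"
proof -
  have rest: "(\<Sum>z\<in>neighbours E v - {u} - {x}. (f({x, v} := a)) {z, v})
      = (\<Sum>z\<in>neighbours E v - {u} - {x}. f {z, v})"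
    using not_in_neighbours_self by (intro sum.cong) (auto simp: doubleton_eq_iff)
  have "wdeg_except E g u v = g {x, v} + (\<Sum>z\<in>neighbours E v - {u} - {x}. g {z, v})"
    for g :: "'a set \<Rightarrow> 'g"
    unfolding wdeg_except_def using assms by (simp add: sum.remove finite_neighbours)
  from this[of f] this[of "f({x, v} := a)"] rest show ?thesis by simp
qed

lemma finite_forbidden: "finite (forbidden E M f D u v)"
  unfolding forbidden_def using finite_neighbours by auto

lemma card_forbidden_le:
  assumes "u \<in> neighbours E v" "u \<notin> D" "v \<notin> M \<or> 2 \<le> card (neighbours E v)"
  shows "card (forbidden E M f D u v) \<le> card (neighbours E v) - 1"
proof (cases "v \<in> M")
  case True
  then show ?thesis using assms(3) unfolding forbidden_def by simp
next
  case False
  let ?Z = "{z \<in> D \<inter> neighbours E v. z \<notin> M}"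
  have "?Z \<subseteq> neighbours E v - {u}" using assms(2) by auto
  then have "card ?Z \<le> card (neighbours E v) - 1"
    using card_mono[of "neighbours E v - {u}" ?Z] assms(1) finite_neighbours[of v] by simp
  moreover have "card (forbidden E M f D u v) \<le> card ?Z"
    using False unfolding forbidden_def by (simp add: card_image_le finite_neighbours)
  ultimately show ?thesis by linarith
qed

lemma card_insert_zero_forbidden_le:
  assumes "u \<in> neighbours E v" "u \<notin> D"
  shows "card (insert 0 (forbidden E M f D u v)) \<le> card (neighbours E v)"
proof (cases "v \<in> M \<and> card (neighbours E v) < 2")
  case True
  \<comment> \<open>a marked leaf: its only forbidden label is \<open>- 0 = 0\<close> itself\<close>
  then have "wdeg_except E f u v = 0"
    using neighbours_eq_singleton[OF assms(1)] unfolding wdeg_except_def by simp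
  then show ?thesis using True assms(1) unfolding forbidden_def
    by (simp add: Suc_le_eq card_gt_0_iff finite_neighbours) blast
next
  case False
  then have "card (forbidden E M f D u v) \<le> card (neighbours E v) - 1"
    using card_forbidden_le[OF assms] by auto
  moreover have "card (neighbours E v) \<noteq> 0"
    using assms(1) finite_neighbours card_0_eq by blast
  ultimately show ?thesis by (auto simp: card_insert_if finite_forbidden)
qed

lemma proper_at_fun_upd_edge:
  fixes f :: "'a set \<Rightarrow> 'g::ab_group_add"
  assumes "u \<in> neighbours E v" "u \<notin> D" "v \<notin> D" "a \<notin> forbidden E M f D u v"
  shows "proper_at E M (f({u, v} := a)) D v"
  unfolding proper_at_def
proof (intro conjI impI ballI)
  let ?b = "wdeg_except E f u v"
  have wv: "wdeg E (f({u, v} := a)) v = ?b + a" by (rule wdeg_fun_upd_edge[OF assms(1)])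
  show "wdeg E (f({u, v} := a)) v \<noteq> 0" if "v \<in> M"
    using that assms(4) unfolding wv forbidden_def by (auto simp: add_eq_0_iff)
  fix z assume z: "z \<in> D" "{z, v} \<in> E \<and> z \<notin> M \<and> v \<notin> M"
  then have "wdeg E f z - ?b \<in> forbidden E M f D u v"
    unfolding forbidden_def neighbours_def by auto
  then have "wdeg E f z \<noteq> ?b + a" using assms(4) by (auto simp: diff_eq_eq add.commute)
  moreover have "wdeg E (f({u, v} := a)) z = wdeg E f z"
    using z(1) assms(2,3) by (intro wdeg_fun_upd_other) auto
  ultimately show "wdeg E (f({u, v} := a)) z \<noteq> wdeg E (f({u, v} := a)) v" using wv by simp
qed

lemma ex_label_proper_on_insert:
  fixes f :: "'a set \<Rightarrow> 'g::ab_group_add"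
  assumes labels: "infinite (UNIV :: 'g set) \<or> N \<le> card (UNIV :: 'g set)"
    and proper: "proper_on E M f D" and "u \<notin> D" "v \<notin> D" and uv: "u \<in> neighbours E v"
    and "finite Z" and small: "card (Z - {0}) + card (neighbours E v) < N"
  shows "\<exists>a. a \<noteq> 0 \<and> a \<notin> Z \<and> proper_on E M (f({u, v} := a)) (insert v D)"
proof -
  let ?F = "forbidden E M f D u v"
  have "card (Z \<union> insert 0 ?F) = card ((Z - {0}) \<union> insert 0 ?F)"
    by (rule arg_cong[where f = card]) blast
  also have "\<dots> \<le> card (Z - {0}) + card (insert 0 ?F)" by (rule card_Un_le)
  also have "\<dots> < N"
    using small card_insert_zero_forbidden_le[OF uv \<open>u \<notin> D\<close>, of M f] by linarith
  finally have "card (Z \<union> insert 0 ?F) < N" .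
  moreover have "finite (Z \<union> insert 0 ?F)" using \<open>finite Z\<close> finite_forbidden by simp
  ultimately obtain a where a: "a \<notin> Z \<union> insert 0 ?F"
    using ex_not_in_small_set[OF labels] by blast
  have "proper_on E M (f({u, v} := a)) D"
    using proper \<open>u \<notin> D\<close> \<open>v \<notin> D\<close> by (simp add: proper_on_fun_upd)
  moreover have "proper_at E M (f({u, v} := a)) D v"
    using a by (intro proper_at_fun_upd_edge assms) auto
  ultimately show ?thesis using a proper_on_insert_iff[OF loop_free] by blast
qed

text \<open>Labelling the edge \<open>ry\<close> settles both endpoints at once; they cannot clash with
  each other because their weighted degrees differ by the label-independent amount
  \<open>wdeg_except E f y r - wdeg_except E f r y\<close>.\<close>
lemma ex_label_proper_on_insert2:
  fixes f :: "'a set \<Rightarrow> 'g::ab_group_add"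
  assumes labels: "infinite (UNIV :: 'g set) \<or> N \<le> card (UNIV :: 'g set)"
    and proper: "proper_on E M f D" and "r \<notin> D" "y \<notin> D" and ry: "r \<in> neighbours E y"
    and deg_r: "2 \<le> card (neighbours E r)"
    and differ: "wdeg_except E f y r \<noteq> wdeg_except E f r y"
    and small: "card (neighbours E y) + card (neighbours E r) \<le> N"
  shows "\<exists>b. b \<noteq> 0 \<and> proper_on E M (f({r, y} := b)) (insert r (insert y D))"
proof -
  have yr: "y \<in> neighbours E r" using ry neighbours_sym by blast
  let ?F = "forbidden E M f D r y" and ?G = "forbidden E M f D y r"
  have "card (insert 0 ?F \<union> ?G) \<le> card (insert 0 ?F) + card ?G" by (rule card_Un_le)
  also have "\<dots> < N"
    using card_insert_zero_forbidden_le[OF ry \<open>r \<notin> D\<close>, of M f]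
      card_forbidden_le[OF yr \<open>y \<notin> D\<close>, of M f] deg_r small by linarith
  finally have "card (insert 0 ?F \<union> ?G) < N" .
  moreover have "finite (insert 0 ?F \<union> ?G)" by (simp add: finite_forbidden)
  ultimately obtain b where b: "b \<notin> insert 0 ?F \<union> ?G"
    using ex_not_in_small_set[OF labels] by blast
  let ?f = "f({r, y} := b)"
  have "proper_on E M ?f D"
    using proper \<open>r \<notin> D\<close> \<open>y \<notin> D\<close> by (simp add: proper_on_fun_upd)
  moreover have "proper_at E M ?f D y"
    using b by (intro proper_at_fun_upd_edge ry \<open>r \<notin> D\<close> \<open>y \<notin> D\<close>) auto
  moreover have "proper_at E M ?f (insert y D) r"
  proof -
    have "proper_at E M (f({y, r} := b)) D r"
      using b by (intro proper_at_fun_upd_edge yr \<open>r \<notin> D\<close> \<open>y \<notin> D\<close>) auto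
    moreover have "wdeg E ?f y = wdeg_except E f r y + b" by (rule wdeg_fun_upd_edge[OF ry])
    moreover have "wdeg E ?f r = wdeg_except E f y r + b"
      using wdeg_fun_upd_edge[OF yr, of f b] by (simp add: insert_commute)
    ultimately show ?thesis using differ unfolding proper_at_def by (auto simp: insert_commute)
  qed
  ultimately show ?thesis using b proper_on_insert_iff[OF loop_free] by blast
qed

text \<open>Vertices are settled in order of decreasing rank, each through the edge to a
  neighbour of lower rank; that neighbour is settled later, so the labels chosen
  afterwards never touch an already settled vertex.\<close>
lemma ex_proper_on_Un_ranked:
  fixes f :: "'a set \<Rightarrow> 'g::ab_group_add" and rank :: "'a \<Rightarrow> nat"
  assumes labels: "infinite (UNIV :: 'g set) \<or> N \<le> card (UNIV :: 'g set)"
    and "finite S"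
    and lower: "\<forall>v\<in>S. \<exists>u\<in>neighbours E v. u \<notin> D \<and> rank u < rank v"
    and deg: "\<forall>v\<in>S. card (neighbours E v) < N"
    and "S \<inter> D = {}" and "proper_on E M f D" and "\<forall>e\<in>E. f e \<noteq> 0"
  shows "\<exists>f' :: 'a set \<Rightarrow> 'g. (\<forall>e\<in>E. f' e \<noteq> 0) \<and> proper_on E M f' (D \<union> S)"
  using \<open>finite S\<close> assms(3-)
proof (induction S arbitrary: D f rule: finite_ranking_induct[where f = rank])
  case empty
  then show ?case by (intro exI[of _ f]) simp
next
  case (insert v S)
  show ?case
  proof (cases "v \<in> S")
    case True
    then show ?thesis using insert by (simp add: insert_absorb)
  next
    case False
    obtain u where u: "u \<in> neighbours E v" "u \<notin> D" "rank u < rank v"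
      using insert.prems(1) by auto
    have "v \<notin> D" using insert.prems(3) by auto
    obtain a where a: "a \<noteq> 0" "proper_on E M (f({u, v} := a)) (insert v D)"
      using ex_label_proper_on_insert[OF labels insert.prems(4) u(2) \<open>v \<notin> D\<close> u(1), of "{}"]
        insert.prems(2) by auto
    have "\<forall>w\<in>S. \<exists>u\<in>neighbours E w. u \<notin> insert v D \<and> rank u < rank w"
    proof
      fix w assume "w \<in> S"
      then obtain u' where "u' \<in> neighbours E w" "u' \<notin> D" "rank u' < rank w"
        using insert.prems(1) by auto
      moreover have "rank w \<le> rank v" using insert.hyps(2) \<open>w \<in> S\<close> .
      ultimately show "\<exists>u\<in>neighbours E w. u \<notin> insert v D \<and> rank u < rank w"
        by (metis insertE not_le order.strict_trans1)
    qed
    moreover have "\<forall>w\<in>S. card (neighbours E w) < N" using insert.prems(2) by simp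
    moreover have "S \<inter> insert v D = {}" using insert.prems(3) False by auto
    moreover have "\<forall>e\<in>E. (f({u, v} := a)) e \<noteq> 0" using insert.prems(5) a(1) by simp
    ultimately obtain f' :: "'a set \<Rightarrow> 'g"
      where "\<forall>e\<in>E. f' e \<noteq> 0" "proper_on E M f' (insert v D \<union> S)"
      using insert.IH a(2) by blast
    then show ?thesis by auto
  qed
qed

lemma ex_proper_on_Un_path3:
  fixes f :: "'a set \<Rightarrow> 'g::ab_group_add"
  assumes labels: "infinite (UNIV :: 'g set) \<or> N \<le> card (UNIV :: 'g set)"
    and proper: "proper_on E M f D" and nonzero: "\<forall>e\<in>E. f e \<noteq> 0"
    and "x \<notin> D" "r \<notin> D" "y \<notin> D"
    and xr: "x \<in> neighbours E r" and yr: "y \<in> neighbours E r" and "x \<noteq> y"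
    and deg_x: "card (neighbours E x) < N"
    and deg_yr: "card (neighbours E y) + card (neighbours E r) \<le> N"
    and x_or_end: "card (neighbours E x) + 1 < N
      \<or> neighbours E y = {r} \<and> neighbours E r = {x, y}"
  shows "\<exists>f' :: 'a set \<Rightarrow> 'g. (\<forall>e\<in>E. f' e \<noteq> 0) \<and> proper_on E M f' (D \<union> {x, r, y})"
proof -
  have rx: "r \<in> neighbours E x" and ry: "r \<in> neighbours E y"
    using xr yr neighbours_sym by blast+
  have "r \<noteq> x" "r \<noteq> y" using rx ry not_in_neighbours_self by blast+
  \<comment> \<open>the label of \<open>rx\<close> that would make the sums at \<open>r\<close> and \<open>y\<close> over their other edges
    equal, which \<open>ex_label_proper_on_insert2\<close> must exclude\<close>
  define c where "c = wdeg_except E f r y - wdeg_except E f y r + f {x, r}"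
  have "card ({c} - {0}) + card (neighbours E x) < N"
  proof (cases "card (neighbours E x) + 1 < N")
    case True
    then show ?thesis by (simp add: card_Diff_singleton_if)
  next
    case False
    with x_or_end have "neighbours E y = {r}" "neighbours E r = {x, y}" by auto
    moreover have "{x, y} - {y} = {x}" using \<open>x \<noteq> y\<close> by auto
    ultimately have "c = 0" unfolding c_def wdeg_except_def by simp
    then show ?thesis using deg_x by simp
  qed
  then obtain a where a: "a \<noteq> 0" "a \<notin> {c}"
    and proper_x: "proper_on E M (f({r, x} := a)) (insert x D)"
    using ex_label_proper_on_insert[OF labels proper \<open>r \<notin> D\<close> \<open>x \<notin> D\<close> rx] by blast
  let ?f = "f({r, x} := a)"
  have "wdeg_except E ?f r y = wdeg_except E f r y"
    using \<open>r \<noteq> y\<close> \<open>x \<noteq> y\<close> by (intro wdeg_except_fun_upd_other) auto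
  moreover have "wdeg_except E ?f y r = wdeg_except E f y r - f {x, r} + a"
  proof -
    have "x \<in> neighbours E r - {y}" using xr \<open>x \<noteq> y\<close> by blast
    then show ?thesis using wdeg_except_fun_upd_edge[of x r y f a] by (simp add: insert_commute)
  qed
  ultimately have differ: "wdeg_except E ?f y r \<noteq> wdeg_except E ?f r y"
    using a(2) unfolding c_def by (auto simp: algebra_simps)
  have "card {x, y} \<le> card (neighbours E r)"
    using xr yr by (intro card_mono finite_neighbours) auto
  then have deg_r: "2 \<le> card (neighbours E r)" using \<open>x \<noteq> y\<close> by simp
  have "r \<notin> insert x D" "y \<notin> insert x D"
    using \<open>r \<noteq> x\<close> \<open>x \<noteq> y\<close> \<open>r \<notin> D\<close> \<open>y \<notin> D\<close> by auto
  then obtain b where b: "b \<noteq> 0"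
    and "proper_on E M (?f({r, y} := b)) (insert r (insert y (insert x D)))"
    using ex_label_proper_on_insert2[OF labels proper_x _ _ ry deg_r differ deg_yr] by blast
  moreover have "insert r (insert y (insert x D)) = D \<union> {x, r, y}" by auto
  moreover have "\<forall>e\<in>E. (?f({r, y} := b)) e \<noteq> 0" using nonzero a(1) b by simp
  ultimately show ?thesis by (intro exI[of _ "?f({r, y} := b)"]) simp
qed

section \<open>Connected components\<close>

definition adj_rel :: "('a \<times> 'a) set" where
  "adj_rel = {(x, y). x \<in> V \<and> y \<in> V \<and> adj E x y}"

lemma component_eq_rtrancl: "component V E v = {u\<in>V. (v, u) \<in> adj_rel\<^sup>*}"
  unfolding component_def adj_rel_def ..

lemma adj_rel_iff: "(x, y) \<in> adj_rel \<longleftrightarrow> x \<in> V \<and> y \<in> V \<and> y \<in> neighbours E x"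
  unfolding adj_rel_def adj_def neighbours_def by (auto simp: insert_commute)

lemma sym_adj_rel: "sym adj_rel"
  unfolding sym_def adj_rel_iff using neighbours_sym by blast

lemma self_in_component: "v \<in> V \<Longrightarrow> v \<in> component V E v"
  unfolding component_eq_rtrancl by simp

lemma component_subset: "component V E v \<subseteq> V"
  unfolding component_eq_rtrancl by auto

lemma component_eq_if_mem:
  assumes "u \<in> component V E v"
  shows "component V E u = component V E v"
proof -
  have "(v, u) \<in> adj_rel\<^sup>*" using assms unfolding component_eq_rtrancl by auto
  moreover then have "(u, v) \<in> adj_rel\<^sup>*" using sym_adj_rel by (meson sym_rtrancl symD)
  ultimately show ?thesis unfolding component_eq_rtrancl by (auto intro: rtrancl_trans)
qed

lemma neighbour_in_component:
  assumes "u \<in> component V E v" "w \<in> neighbours E u"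
  shows "w \<in> component V E v"
proof -
  have "(u, w) \<in> adj_rel"
    using assms component_subset neighbours_subset adj_rel_iff by blast
  then show ?thesis using assms(1) unfolding component_eq_rtrancl
    by (auto simp: adj_rel_iff intro: rtrancl_into_rtrancl)
qed

lemma component_subset_if_closed:
  assumes "v \<in> S" "\<forall>a\<in>S. neighbours E a \<subseteq> S"
  shows "component V E v \<subseteq> S"
proof
  fix u assume "u \<in> component V E v"
  then have "(v, u) \<in> adj_rel\<^sup>*" unfolding component_eq_rtrancl by auto
  then show "u \<in> S"
    by (induction rule: rtrancl_induct) (use assms adj_rel_iff in auto)
qed

lemma disjoint_components:
  "component V E u \<noteq> component V E v \<Longrightarrow> component V E u \<inter> component V E v = {}"
  using component_eq_if_mem by blast

lemma ex_rank_decreasing_to: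
  assumes "T \<subseteq> component V E v0" "T \<noteq> {}"
  shows "\<exists>rank :: 'a \<Rightarrow> nat. \<forall>v\<in>component V E v0 - T.
    \<exists>u\<in>neighbours E v. u \<in> component V E v0 \<and> rank u < rank v"
proof -
  define rank where "rank v = (LEAST n. \<exists>t\<in>T. (v, t) \<in> adj_rel ^^ n)" for v
  have "\<exists>u\<in>neighbours E v. u \<in> component V E v0 \<and> rank u < rank v"
    if v: "v \<in> component V E v0 - T" for v
  proof -
    obtain t0 where "t0 \<in> T" using assms(2) by auto
    then have "(v0, v) \<in> adj_rel\<^sup>*" "(v0, t0) \<in> adj_rel\<^sup>*"
      using v assms(1) unfolding component_eq_rtrancl by auto
    then have "(v, t0) \<in> adj_rel\<^sup>*" using sym_adj_rel by (meson rtrancl_trans sym_rtrancl symD)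
    then have "\<exists>n. \<exists>t\<in>T. (v, t) \<in> adj_rel ^^ n" using \<open>t0 \<in> T\<close> rtrancl_power by blast
    then have "\<exists>t\<in>T. (v, t) \<in> adj_rel ^^ rank v" unfolding rank_def by (rule LeastI_ex)
    then obtain t where t: "t \<in> T" "(v, t) \<in> adj_rel ^^ rank v" by blast
    have "rank v \<noteq> 0"
    proof
      assume "rank v = 0"
      with t have "v = t" by simp
      with t v show False by simp
    qed
    then obtain m where m: "rank v = Suc m" using not0_implies_Suc by blast
    with t obtain w where w: "(v, w) \<in> adj_rel" "(w, t) \<in> adj_rel ^^ m" by (metis relpow_Suc_D2)
    have "rank w \<le> m" unfolding rank_def by (rule Least_le) (use w t in blast)
    moreover have "w \<in> neighbours E v" using w adj_rel_iff by auto
    moreover have "w \<in> component V E v0" using v \<open>w \<in> neighbours E v\<close> neighbour_in_component by blast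
    ultimately show ?thesis using m by (intro bexI[of _ w]) auto
  qed
  then show ?thesis by blast
qed

lemma three_le_card_if_closed:
  assumes "3 \<le> card (component V E v0)" "v \<in> component V E v0"
    and "v \<in> S" "\<forall>a\<in>S. neighbours E a \<subseteq> S" "finite S"
  shows "3 \<le> card S"
  using assms component_subset_if_closed[OF assms(3,4)] component_eq_if_mem[OF assms(2)]
  by (metis card_mono order_trans)

lemma neighbours_nonempty:
  "3 \<le> card (component V E v0) \<Longrightarrow> v \<in> component V E v0 \<Longrightarrow> neighbours E v \<noteq> {}"
  using three_le_card_if_closed[of v0 v "{v}"] by auto

lemma ex_neighbour_off_edge:
  assumes "3 \<le> card (component V E v0)" "r \<in> component V E v0" "y \<in> neighbours E r"
  shows "\<exists>x. x \<notin> {r, y} \<and> (x \<in> neighbours E r \<or> x \<in> neighbours E y)"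
proof (rule ccontr)
  assume "\<nexists>x. x \<notin> {r, y} \<and> (x \<in> neighbours E r \<or> x \<in> neighbours E y)"
  then have "3 \<le> card {r, y}" by (intro three_le_card_if_closed[OF assms(1,2)]) auto
  moreover have "r \<noteq> y" using assms(3) not_in_neighbours_self by blast
  ultimately show False by simp
qed

lemma ex_degree_ge_2:
  assumes "3 \<le> card (component V E v0)" "v0 \<in> V"
  shows "\<exists>a\<in>component V E v0. 2 \<le> card (neighbours E a)"
proof -
  have v0: "v0 \<in> component V E v0" using assms(2) by (rule self_in_component)
  then obtain y where y: "y \<in> neighbours E v0" using neighbours_nonempty assms(1) by blast
  then obtain x where x: "x \<notin> {v0, y}" "x \<in> neighbours E v0 \<or> x \<in> neighbours E y"
    using ex_neighbour_off_edge[OF assms(1) v0] by blast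
  have "v0 \<in> neighbours E y" using y neighbours_sym by blast
  show ?thesis
  proof (cases "x \<in> neighbours E v0")
    case True
    then have "card {x, y} \<le> card (neighbours E v0)"
      using y by (intro card_mono finite_neighbours) auto
    then have "2 \<le> card (neighbours E v0)" using x(1) by simp
    then show ?thesis using v0 by blast
  next
    case False
    then have "card {x, v0} \<le> card (neighbours E y)"
      using x(2) \<open>v0 \<in> neighbours E y\<close> by (intro card_mono finite_neighbours) auto
    then show ?thesis using x(1) y v0 neighbour_in_component by fastforce
  qed
qed

section \<open>Low-degree vertices and the anchor path\<close>

lemma ex_few_neighbours_within:
  assumes "S \<subseteq> V" "S \<noteq> {}"
  shows "\<exists>y\<in>S. card (neighbours E y \<inter> S) < col V E"
proof -
  let ?bounded = "\<lambda>k. \<forall>V' E'. subgraph V' E' V E \<and> V' \<noteq> {} \<longrightarrow> min_degree V' E' < k"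
  \<comment> \<open>some \<open>k\<close> qualifies, so the \<open>LEAST\<close> in the definition of \<open>col\<close> is attained\<close>
  have "?bounded (max_degree V E + 1)"
  proof (intro allI impI)
    fix V' E' assume sub: "subgraph V' E' V E \<and> V' \<noteq> {}"
    then obtain v where v: "v \<in> V'" by auto
    have "finite V'" using sub finite_V finite_subset unfolding subgraph_def by blast
    then have "min_degree V' E' \<le> degree E' v" unfolding min_degree_def using v by simp
    also have "\<dots> \<le> degree E v" unfolding degree_def using sub finite_neighbours[of v]
      by (intro card_mono) (auto simp: neighbours_def subgraph_def)
    also have "\<dots> \<le> max_degree V E"
      using degree_le_max_degree v sub
      by (simp add: degree_eq_card_neighbours subgraph_def subset_iff)
    finally show "min_degree V' E' < max_degree V E + 1" by simp
  qed
  then have "?bounded (col V E)" unfolding col_def by (rule LeastI)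
  moreover have "subgraph S {e\<in>E. e \<subseteq> S} V E" unfolding subgraph_def using assms(1) by auto
  ultimately have "min_degree S {e\<in>E. e \<subseteq> S} < col V E" using assms(2) by blast
  moreover have "finite S" using assms(1) finite_V finite_subset by blast
  then have "min_degree S {e\<in>E. e \<subseteq> S} \<in> degree {e\<in>E. e \<subseteq> S} ` S"
    unfolding min_degree_def using assms(2) by simp
  moreover have "degree {e\<in>E. e \<subseteq> S} y = card (neighbours E y \<inter> S)" if "y \<in> S" for y
    unfolding degree_def neighbours_def using that by (intro arg_cong[where f = card]) auto
  ultimately show ?thesis by force
qed

lemma two_le_col:
  assumes "u \<in> neighbours E v"
  shows "2 \<le> col V E"
proof -
  have "u \<noteq> v" using assms not_in_neighbours_self by blast
  have uv: "{u, v} \<subseteq> V" using assms neighbours_subset neighbours_sym by blast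
  have "neighbours E w \<inter> {u, v} = {u, v} - {w}" if "w \<in> {u, v}" for w
    using that assms neighbours_sym not_in_neighbours_self by blast
  then show ?thesis
    using ex_few_neighbours_within[OF uv] \<open>u \<noteq> v\<close> by (force simp: card_insert_if)
qed

text \<open>The bound on \<open>deg y + deg r\<close> leaves room for the label of \<open>ry\<close>, the bound on
  \<open>deg x\<close> for the label of \<open>rx\<close>, which must avoid one extra value; in the alternative
  (\<open>y\<close> a leaf, \<open>r\<close> of degree 2) that extra value is 0 and costs nothing.\<close>
definition anchor_path :: "'a \<Rightarrow> 'a \<Rightarrow> 'a \<Rightarrow> bool" where
  "anchor_path x r y \<longleftrightarrow> x \<in> neighbours E r \<and> y \<in> neighbours E r \<and> x \<noteq> y
     \<and> card (neighbours E y) + card (neighbours E r) < max_degree V E + col V E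
     \<and> (card (neighbours E x) + 2 < max_degree V E + col V E
        \<or> neighbours E y = {r} \<and> neighbours E r = {x, y})"

lemma ex_anchor_path_if_col_ge_3:
  assumes "3 \<le> card (component V E v0)" "3 \<le> col V E"
  shows "\<exists>x r y. r \<in> component V E v0 \<and> anchor_path x r y"
proof -
  let ?K = "component V E v0"
  have "?K \<noteq> {}" using assms(1) by auto
  then obtain y where y: "y \<in> ?K" "card (neighbours E y \<inter> ?K) < col V E"
    using ex_few_neighbours_within component_subset by blast
  have "neighbours E y \<inter> ?K = neighbours E y" using y(1) neighbour_in_component by blast
  then have deg_y: "card (neighbours E y) < col V E" using y(2) by simp
  obtain r where r: "r \<in> neighbours E y" using neighbours_nonempty[OF assms(1) y(1)] by blast
  then have "r \<in> ?K" "y \<in> neighbours E r" using y(1) neighbour_in_component neighbours_sym by auto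
  obtain x where x: "x \<notin> {y, r}" "x \<in> neighbours E y \<or> x \<in> neighbours E r"
    using ex_neighbour_off_edge[OF assms(1) y(1) r] by blast
  have "card (neighbours E z) \<le> max_degree V E" if "z \<in> ?K" for z
    using that component_subset degree_le_max_degree by blast
  then have "card (neighbours E x) \<le> max_degree V E" "card (neighbours E r) \<le> max_degree V E"
    using x \<open>r \<in> ?K\<close> y(1) neighbour_in_component by blast+
  then have "anchor_path x y r \<or> anchor_path x r y"
    using x r \<open>y \<in> neighbours E r\<close> deg_y assms(2) unfolding anchor_path_def by auto
  then show ?thesis using y(1) \<open>r \<in> ?K\<close> by blast
qed

text \<open>With \<open>col V E = 2\<close> the graph is a forest: some vertex \<open>r\<close> of degree at least 2 has
  at most one neighbour of degree at least 2, and all its other neighbours are leaves.\<close>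
lemma ex_anchor_path_if_col_le_2:
  assumes "3 \<le> card (component V E v0)" "v0 \<in> V" "col V E \<le> 2"
  shows "\<exists>x r y. r \<in> component V E v0 \<and> anchor_path x r y"
proof -
  let ?K = "component V E v0"
  let ?branching = "{v\<in>?K. 2 \<le> card (neighbours E v)}"
  have "?branching \<subseteq> V" "?branching \<noteq> {}"
    using component_subset ex_degree_ge_2[OF assms(1,2)] by auto
  then obtain r where r: "r \<in> ?K" "2 \<le> card (neighbours E r)"
    and few: "card (neighbours E r \<inter> ?branching) < col V E"
    using ex_few_neighbours_within by blast
  have "neighbours E r \<noteq> {}" using r(2) by auto
  then obtain u where "u \<in> neighbours E r" by blast
  then have col: "col V E = 2" using two_le_col[of u r] assms(3) by simp
  have max_deg: "card (neighbours E r) \<le> max_degree V E"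
    using r(1) component_subset degree_le_max_degree by blast
  let ?leaves = "neighbours E r - ?branching"
  have leaf: "neighbours E z = {r}" if z: "z \<in> ?leaves" for z
  proof (rule neighbours_eq_singleton)
    show "r \<in> neighbours E z" using z neighbours_sym by blast
    have "z \<in> ?K" using z r(1) neighbour_in_component by blast
    then show "card (neighbours E z) < 2" using z by auto
  qed
  have "card (neighbours E r) = card ((neighbours E r \<inter> ?branching) \<union> ?leaves)"
    by (rule arg_cong[where f = card]) blast
  then have "card (neighbours E r) \<le> card (neighbours E r \<inter> ?branching) + card ?leaves"
    using card_Un_le by simp
  then have leaves: "card (neighbours E r) \<le> 1 + card ?leaves" using few col by linarith
  have fin: "finite ?leaves" using finite_neighbours by simp
  show ?thesis
  proof (cases "card (neighbours E r) = 2")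
    case True
    then have "card ?leaves \<noteq> 0" using leaves by linarith
    then have "?leaves \<noteq> {}" by (metis card.empty)
    then obtain y where y: "y \<in> ?leaves" by blast
    then have "card (neighbours E r - {y}) = 1" using True finite_neighbours by simp
    then obtain x where x: "neighbours E r - {y} = {x}" by (auto simp: card_1_singleton_iff)
    then have "neighbours E r = {x, y}" "x \<noteq> y" using y by auto
    moreover have "card (neighbours E y) + card (neighbours E r) < max_degree V E + col V E"
      using leaf[OF y] True max_deg col by simp
    ultimately have "anchor_path x r y" using leaf[OF y] unfolding anchor_path_def by simp
    then show ?thesis using r(1) by blast
  next
    case False
    then have "\<not> card ?leaves \<le> Suc 0" using leaves r(2) by linarith
    then obtain x y where xy: "x \<in> ?leaves" "y \<in> ?leaves" "x \<noteq> y"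
      using card_le_Suc0_iff_eq[OF fin] by blast
    have "card (neighbours E y) + card (neighbours E r) < max_degree V E + col V E"
      "card (neighbours E x) + 2 < max_degree V E + col V E"
      using leaf[OF xy(1)] leaf[OF xy(2)] False r(2) max_deg col by simp_all
    then have "anchor_path x r y" using xy unfolding anchor_path_def by simp
    then show ?thesis using r(1) by blast
  qed
qed

lemma ex_anchor_path:
  assumes "3 \<le> card (component V E v0)" "v0 \<in> V"
  shows "\<exists>x r y. r \<in> component V E v0 \<and> anchor_path x r y"
proof (cases "3 \<le> col V E")
  case True
  then show ?thesis by (rule ex_anchor_path_if_col_ge_3[OF assms(1)])
next
  case False
  then show ?thesis by (intro ex_anchor_path_if_col_le_2[OF assms]) simp
qed

section \<open>Labelling component by component\<close>

lemma ex_proper_on_Un_component: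
  fixes f :: "'a set \<Rightarrow> 'g::ab_group_add"
  assumes labels:
      "infinite (UNIV :: 'g set) \<or> max_degree V E + col V E - 1 \<le> card (UNIV :: 'g set)"
    and "v0 \<in> V" "3 \<le> card (component V E v0)" "component V E v0 \<inter> D = {}"
    and proper: "proper_on E M f D" and nonzero: "\<forall>e\<in>E. f e \<noteq> 0"
  shows "\<exists>f' :: 'a set \<Rightarrow> 'g. (\<forall>e\<in>E. f' e \<noteq> 0)
    \<and> proper_on E M f' (D \<union> component V E v0)"
proof -
  let ?K = "component V E v0" and ?N = "max_degree V E + col V E - 1"
  obtain x r y where "r \<in> ?K" and anchor: "anchor_path x r y"
    using ex_anchor_path assms(2,3) by blast
  then have xr: "x \<in> neighbours E r" and yr: "y \<in> neighbours E r"
    unfolding anchor_path_def by auto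
  then have T: "{x, r, y} \<subseteq> ?K" using \<open>r \<in> ?K\<close> neighbour_in_component by blast
  have deg: "\<forall>v\<in>?K. card (neighbours E v) < ?N"
  proof
    fix v assume "v \<in> ?K"
    then have "card (neighbours E v) \<le> max_degree V E"
      using component_subset degree_le_max_degree by blast
    then show "card (neighbours E v) < ?N" using two_le_col[OF xr] by linarith
  qed
  obtain rank :: "'a \<Rightarrow> nat"
    where "\<forall>v\<in>?K - {x, r, y}. \<exists>u\<in>neighbours E v. u \<in> ?K \<and> rank u < rank v"
    using ex_rank_decreasing_to[OF T] by blast
  then have lower: "\<forall>v\<in>?K - {x, r, y}. \<exists>u\<in>neighbours E v. u \<notin> D \<and> rank u < rank v"
    using assms(4) by blast
  have "finite (?K - {x, r, y})" using finite_V component_subset finite_subset by blast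
  moreover have "\<forall>v\<in>?K - {x, r, y}. card (neighbours E v) < ?N" using deg by blast
  moreover have "(?K - {x, r, y}) \<inter> D = {}" using assms(4) by blast
  ultimately have "\<exists>f1 :: 'a set \<Rightarrow> 'g. (\<forall>e\<in>E. f1 e \<noteq> 0)
      \<and> proper_on E M f1 (D \<union> (?K - {x, r, y}))"
    using lower proper nonzero by (intro ex_proper_on_Un_ranked[OF labels])
  then obtain f1 :: "'a set \<Rightarrow> 'g" where nonzero1: "\<forall>e\<in>E. f1 e \<noteq> 0"
    and proper1: "proper_on E M f1 (D \<union> (?K - {x, r, y}))" by blast
  have "x \<notin> D \<union> (?K - {x, r, y})" "r \<notin> D \<union> (?K - {x, r, y})"
    "y \<notin> D \<union> (?K - {x, r, y})" using T assms(4) by auto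
  moreover have "x \<noteq> y" using anchor unfolding anchor_path_def by simp
  moreover have "card (neighbours E x) < ?N" using deg T by blast
  moreover have "card (neighbours E y) + card (neighbours E r) \<le> ?N"
    "card (neighbours E x) + 1 < ?N \<or> neighbours E y = {r} \<and> neighbours E r = {x, y}"
    using anchor unfolding anchor_path_def by auto
  ultimately have "\<exists>f' :: 'a set \<Rightarrow> 'g. (\<forall>e\<in>E. f' e \<noteq> 0)
      \<and> proper_on E M f' (D \<union> (?K - {x, r, y}) \<union> {x, r, y})"
    by (rule ex_proper_on_Un_path3[OF labels proper1 nonzero1 _ _ _ xr yr])
  moreover have "D \<union> (?K - {x, r, y}) \<union> {x, r, y} = D \<union> ?K" using T by auto
  ultimately show ?thesis by simp
qed

lemma ex_nonzero_proper_on_V: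
  assumes labels: "infinite (UNIV :: 'g::ab_group_add set)
      \<or> max_degree V E + col V E - 1 \<le> card (UNIV :: 'g set)"
    and big: "\<forall>v\<in>V. 3 \<le> card (component V E v)" and "V \<noteq> {}"
  shows "\<exists>f :: 'a set \<Rightarrow> 'g. (\<forall>e\<in>E. f e \<noteq> 0) \<and> proper_on E M f V"
proof -
  obtain v0 where "v0 \<in> V" using \<open>V \<noteq> {}\<close> by blast
  then obtain a where "a \<in> V" and deg_a: "2 \<le> card (neighbours E a)"
    using ex_degree_ge_2 big component_subset by blast
  then have "2 \<le> max_degree V E" using degree_le_max_degree by (meson order_trans)
  moreover have "neighbours E a \<noteq> {}" using deg_a by auto
  then have "2 \<le> col V E" using two_le_col by blast
  ultimately have "card {0 :: 'g} < max_degree V E + col V E - 1" by simp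
  then obtain g0 :: 'g where "g0 \<noteq> 0" using ex_not_in_small_set[OF labels] by blast
  have components: "\<exists>f :: 'a set \<Rightarrow> 'g. (\<forall>e\<in>E. f e \<noteq> 0) \<and> proper_on E M f (\<Union>C)"
    if "finite C" "C \<subseteq> component V E ` V" for C
    using that
  proof (induction rule: finite_subset_induct')
    case empty
    show ?case using \<open>g0 \<noteq> 0\<close> unfolding proper_on_def by (intro exI[of _ "\<lambda>_. g0"]) simp
  next
    case (insert K C)
    then obtain v where v: "v \<in> V" "K = component V E v" by blast
    have "K \<inter> K' = {}" if K': "K' \<in> C" for K'
    proof -
      obtain w where "K' = component V E w" using K' insert.hyps(3) by blast
      moreover have "K \<noteq> K'" using K' insert.hyps(4) by blast
      ultimately show ?thesis using v(2) disjoint_components by blast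
    qed
    then have "component V E v \<inter> \<Union>C = {}" using v(2) by blast
    moreover obtain f :: "'a set \<Rightarrow> 'g" where "\<forall>e\<in>E. f e \<noteq> 0" "proper_on E M f (\<Union>C)"
      using insert.IH by blast
    ultimately have "\<exists>f' :: 'a set \<Rightarrow> 'g. (\<forall>e\<in>E. f' e \<noteq> 0)
        \<and> proper_on E M f' (\<Union>C \<union> component V E v)"
      using big v(1) by (intro ex_proper_on_Un_component[OF labels v(1)]) auto
    then show ?case using v(2) by (simp add: Un_commute)
  qed
  have "\<Union>(component V E ` V) = V" using self_in_component component_subset by blast
  moreover have "\<exists>f :: 'a set \<Rightarrow> 'g. (\<forall>e\<in>E. f e \<noteq> 0)
      \<and> proper_on E M f (\<Union>(component V E ` V))"
    using finite_V by (intro components) auto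
  ultimately show ?thesis by simp
qed

end

theorem theorem4:
  fixes V :: "'a set" and E :: "'a set set" and M :: "'a set"
  assumes "simple_graph V E"
    and "card V \<ge> 3"
    and "\<forall>v\<in>V. card (component V E v) \<ge> 3"
    and "M \<subseteq> V"
    and "\<not> finite (UNIV :: 'g::ab_group_add set) \<or>
         max_degree V E + col V E - 1 \<le> card (UNIV :: 'g set)"
  shows "\<exists>f :: 'a set \<Rightarrow> 'g. (\<forall>e\<in>E. f e \<noteq> 0)
           \<and> (\<forall>v\<in>M. wdeg E f v \<noteq> 0)
           \<and> (\<forall>u v. {u, v} \<in> E \<and> u \<notin> M \<and> v \<notin> M \<longrightarrow> wdeg E f u \<noteq> wdeg E f v)"
proof -
  interpret sgraph V E by (rule sgraph.intro) (rule assms(1))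
  have "V \<noteq> {}" using assms(2) by auto
  then obtain f :: "'a set \<Rightarrow> 'g" where nonzero: "\<forall>e\<in>E. f e \<noteq> 0"
    and proper: "proper_on E M f V"
    using ex_nonzero_proper_on_V assms(3,5) by blast
  have "\<forall>v\<in>M. wdeg E f v \<noteq> 0" using proper assms(4) unfolding proper_on_def by blast
  moreover have "wdeg E f u \<noteq> wdeg E f v" if "{u, v} \<in> E" "u \<notin> M" "v \<notin> M" for u v
    using proper edge_subset[OF that(1)] that unfolding proper_on_def by simp
  ultimately show ?thesis using nonzero by blast
qed

end
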